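(* Let $f\in C([t_+,\infty)\times \mathbb{R}^n,\mathbb{R}^m)$ have a partial derivative $\frac{\partial f}{\partial x}\in C([t_+,\infty)\times \mathbb{R}^n, \mathrm{L}(\mathbb{R}^n,\mathbb{R}^m))$, and suppose that for every fixed $t_*$, $x_*=x_{s_1}^*+x_{s_2}^*+x_{p_1}^*+x_{p_2}^*$ with $(t_*,x_* )\in L_{t_+}$ and $x_{s_2}^*\in D_{s_2}$ the operator $\Phi_{t_*,x_*}=\left[\frac{\partial Q_2f}{\partial x}(t_*,x_* )- B\right] P_2\colon X_2\to Y_2$ is invertible. Then: (i) $f$ satisfies locally a Lipschitz condition with respect to $x$ on $[t_+,\infty)\times\mathbb{R}^n$; and (ii) for every such $(t_*,x_* )$ there exist a neighborhood $U_\delta(t_*,x_{s_1}^*,x_{s_2}^*,x_{p_1}^* )=U_{\delta_1}(t_* )\times U_{\delta_2}(x_{s_1}^* )\times U_{\delta_3}(x_{s_2}^* )\times U_{\delta_4}(x_{p_1}^* )$ (where $U_{\delta_3}(x_{s_2}^* )\subseteq D_{s_2}$ may be closed), a neighborhood $U_\varepsilon(x_{p_2}^* )$ and an invertible operator $\Phi_{t_*,x_*}\in\mathrm{L}(X_2,Y_2)$ (namely the operator above) such that for all $(t,x_{s_1},x_{s_2},x_{p_1})\in U_\delta(t_*,x_{s_1}^*,x_{s_2}^*,x_{p_1}^* )$ and $x_{p_2}^1,x_{p_2}^2\in U_\varepsilon(x_{p_2}^* )$ the mapping $\widetilde{\Psi}(t,x_{s_1},x_{s_2},x_{p_1},x_{p_2}):=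 Q_2f(t,x_{s_1}+x_{s_2}+x_{p_1}+x_{p_2})-B\big|_{X_2}x_{p_2}$ satisfies $\|\widetilde{\Psi}(t,x_{s_1},x_{s_2},x_{p_1},x_{p_2}^1)- \widetilde{\Psi}(t,x_{s_1},x_{s_2},x_{p_1},x_{p_2}^2)-\Phi_{t_*,x_*} [x_{p_2}^1-x_{p_2}^2]\|\le c\|x_{p_2}^1-x_{p_2}^2\|$ with $c=c(\delta,\varepsilon)$ satisfying $\lim_{\delta,\varepsilon\to 0} c(\delta,\varepsilon)<\|\Phi_{t_*,x_*}^{-1}\|^{-1}$. Consequently, whenever the hypotheses of the global-solvability theorem with the differentiability/invertibility assumption hold, the hypotheses of the global-solvability theorem with the local-Lipschitz/contraction assumption (ii) also hold, since all their remaining hypotheses coincide.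
   Context: Consider the DAE $\frac{d}{dt}[Ax]+Bx=f(t,x)$, $t\in[t_+,\infty)$, $x\in\mathbb{R}^n$, with $A,B\in\mathrm{L}(\mathbb{R}^n,\mathbb{R}^m)$ forming a singular pencil $\lambda A+B$ whose regular block has index at most 1. There are direct decompositions $\mathbb{R}^n=X_{s_1}\dot+X_{s_2}\dot+X_1\dot+X_2$, $\mathbb{R}^m=Y_{s_1}\dot+Y_{s_2}\dot+Y_1\dot+Y_2$ with corresponding projectors $S_i\colon\mathbb{R}^n\to X_{s_i}$, $P_i\colon\mathbb{R}^n\to X_i$, $F_i\colon\mathbb{R}^m\to Y_{s_i}$, $Q_i\colon\mathbb{R}^m\to Y_i$ ($i=1,2$), and every $x\in\mathbb{R}^n$ is written $x=x_{s_1}+x_{s_2}+x_{p_1}+x_{p_2}$ with $x_{s_i}=S_ix$, $x_{p_i}=P_ix$. $L_{t_+}=\{(t,x)\in[t_+,\infty)\times\mathbb{R}^n\mid (F_2+Q_2)[Bx-f(t,x)]=0\}$, and $D_{s_2}\subset X_{s_2}$ is a given set. The two global-solvability theorems share the remaining hypotheses (unique solvability of the constraint for $x_{p_2}$ and the Lyapunov-type function condition) and differ only in the hypothesis given in the claim as the assumption versus (ii). *)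

theory Defs
  imports "HOL-Analysis.Analysis"
begin

definition proj_decomp4 :: "('a::real_vector \<Rightarrow> 'a) \<Rightarrow> ('a \<Rightarrow> 'a) \<Rightarrow> ('a \<Rightarrow> 'a) \<Rightarrow> ('a \<Rightarrow> 'a) \<Rightarrow> bool" where
  "proj_decomp4 R1 R2 R3 R4 \<longleftrightarrow>
     (\<forall>R\<in>{R1, R2, R3, R4}. linear R \<and> R \<circ> R = R) \<and>
     (\<forall>x. R1 x + R2 x + R3 x + R4 x = x) \<and>
     R1 \<circ> R2 = (\<lambda>_. 0) \<and> R1 \<circ> R3 = (\<lambda>_. 0) \<and> R1 \<circ> R4 = (\<lambda>_. 0) \<and>
     R2 \<circ> R1 = (\<lambda>_. 0) \<and> R2 \<circ> R3 = (\<lambda>_. 0) \<and> R2 \<circ> R4 = (\<lambda>_. 0) \<and>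
     R3 \<circ> R1 = (\<lambda>_. 0) \<and> R3 \<circ> R2 = (\<lambda>_. 0) \<and> R3 \<circ> R4 = (\<lambda>_. 0) \<and>
     R4 \<circ> R1 = (\<lambda>_. 0) \<and> R4 \<circ> R2 = (\<lambda>_. 0) \<and> R4 \<circ> R3 = (\<lambda>_. 0)"

definition L_set :: "real \<Rightarrow> ('n \<Rightarrow> 'm::real_vector) \<Rightarrow> ('m \<Rightarrow> 'm) \<Rightarrow> ('m \<Rightarrow> 'm)
    \<Rightarrow> (real \<Rightarrow> 'n \<Rightarrow> 'm) \<Rightarrow> (real \<times> 'n) set" where
  "L_set tp B F2 Q2 f = {(t, x). tp \<le> t \<and> F2 (B x - f t x) + Q2 (B x - f t x) = 0}"

text \<open>The operator Phi = [d(Q2 f)/dx (t*,x*) - B] P2, acting on X2 = range P2;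
  D is the partial derivative df/dx(t*,x*).\<close>
definition Phi_op :: "('m::real_vector \<Rightarrow> 'm) \<Rightarrow> ('n \<Rightarrow> 'm) \<Rightarrow> ('n \<Rightarrow> 'm) \<Rightarrow> 'n \<Rightarrow> 'm" where
  "Phi_op Q2 B D = (\<lambda>y. Q2 (D y) - B y)"

definition opnorm_on :: "'a::real_normed_vector set \<Rightarrow> ('a \<Rightarrow> 'b::real_normed_vector) \<Rightarrow> real" where
  "opnorm_on V g = Sup ({0} \<union> {norm (g v) / norm v | v. v \<in> V \<and> v \<noteq> 0})"

end

theory Submission
  imports Defs
begin

text \<open>
  (i) Continuity of \<open>\<partial>f/\<partial>x\<close> bounds it near every point, and the mean value inequality
  turns this bound into a local Lipschitz constant.

  (ii) With \<open>w = xs1 + xs2 + xp1\<close>, the quantity to be estimated is \<open>Q\<^sub>2\<close> applied to the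
  linearization error \<open>f(s, w + y1) - f(s, w + y2) - \<partial>f/\<partial>x(t, x)(y1 - y2)\<close>. By the mean
  value inequality this error is at most \<open>\<parallel>y1 - y2\<parallel>\<close> times the oscillation of \<open>\<partial>f/\<partial>x\<close>
  at \<open>(t, x)\<close> over a ball of radius \<open>d1 + d2 + d3 + d4 + e\<close>, and this oscillation tends to 0 by
  continuity. So \<open>c\<close> can be taken to be \<open>\<parallel>Q\<^sub>2\<parallel>\<close> times the oscillation; its limit is 0, which
  lies below \<open>\<parallel>\<Phi>\<^sup>-\<^sup>1\<parallel>\<^sup>-\<^sup>1\<close> whatever \<open>\<Phi>\<close> is.
\<close>

lemma dist_Pair_le_add: "dist (a, b) (c, d) \<le> dist a c + dist b d"
  unfolding dist_Pair_Pair by (rule sqrt_sum_squares_le_sum) simp_all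

lemma add4_mem_cball:
  fixes u1 :: "'a::real_normed_vector"
  assumes "v1 \<in> cball u1 r1" "v2 \<in> cball u2 r2" "v3 \<in> cball u3 r3" "v4 \<in> cball u4 r4"
  shows "v1 + v2 + v3 + v4 \<in> cball (u1 + u2 + u3 + u4) (r1 + r2 + r3 + r4)"
proof -
  have "dist (u1 + u2 + u3 + u4) (v1 + v2 + v3 + v4)
      \<le> dist u1 v1 + dist u2 v2 + dist u3 v3 + dist u4 v4"
    by (meson add_mono dist_triangle_add order_trans order_refl)
  also have "\<dots> \<le> r1 + r2 + r3 + r4"
    using assms by (intro add_mono) (simp_all only: mem_cball)
  finally show ?thesis
    by (simp only: mem_cball)
qed

lemma filterlim_add_at_right_0:
  fixes f g :: "'a \<Rightarrow> real"
  assumes "filterlim f (at_right 0) F" "filterlim g (at_right 0) F"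
  shows "filterlim (\<lambda>x. f x + g x) (at_right 0) F"
  using assms unfolding filterlim_at
  by (auto intro: tendsto_add_zero elim: eventually_elim2)

lemma filterlim_sum5_at_right_0:
  "filterlim (\<lambda>(d1, d2, d3, d4, e). d1 + d2 + d3 + d4 + e) (at_right (0::real))
     (at_right 0 \<times>\<^sub>F (at_right 0 \<times>\<^sub>F (at_right 0 \<times>\<^sub>F (at_right 0 \<times>\<^sub>F at_right 0))))"
  unfolding case_prod_unfold
  by (intro filterlim_add_at_right_0 filterlim_fst filterlim_compose[OF filterlim_fst filterlim_snd]
      filterlim_compose[OF filterlim_snd filterlim_snd] filterlim_compose[OF _ filterlim_snd])

definition osc_at :: "('a::metric_space \<Rightarrow> 'b::real_normed_vector) \<Rightarrow> 'a set \<Rightarrow> 'a \<Rightarrow> real \<Rightarrow> real"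
  where "osc_at g T a \<rho> = Sup ((\<lambda>p. norm (g p - g a)) ` (T \<inter> cball a \<rho>))"

lemma norm_diff_le_osc_at:
  fixes g :: "'a::heine_borel \<Rightarrow> 'b::real_normed_vector"
  assumes g: "continuous_on T g" and T: "closed T" and p: "p \<in> T" "dist a p \<le> \<rho>"
  shows "norm (g p - g a) \<le> osc_at g T a \<rho>"
proof -
  have "compact (T \<inter> cball a \<rho>)"
    using T by (simp add: closed_Int_compact)
  moreover have "continuous_on (T \<inter> cball a \<rho>) (\<lambda>p. norm (g p - g a))"
    by (intro continuous_intros continuous_on_subset[OF g]) auto
  ultimately have "bdd_above ((\<lambda>p. norm (g p - g a)) ` (T \<inter> cball a \<rho>))"
    by (intro bounded_imp_bdd_above compact_imp_bounded compact_continuous_image)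
  then show ?thesis
    unfolding osc_at_def using p by (intro cSup_upper) auto
qed

lemma osc_at_tendsto_0:
  assumes g: "continuous_on T g" and a: "a \<in> T"
  shows "(osc_at g T a \<longlongrightarrow> 0) (at_right 0)"
proof (rule tendstoI)
  fix \<epsilon> :: real
  assume "0 < \<epsilon>"
  then obtain \<eta> where "\<eta> > 0" and \<eta>: "\<And>p. p \<in> T \<Longrightarrow> dist p a < \<eta> \<Longrightarrow> dist (g p) (g a) < \<epsilon> / 2"
    using g a unfolding continuous_on_iff by (meson half_gt_zero)
  have "0 \<le> osc_at g T a \<rho> \<and> osc_at g T a \<rho> \<le> \<epsilon> / 2" if "0 < \<rho>" "\<rho> < \<eta>" for \<rho>
  proof -
    let ?V = "(\<lambda>p. norm (g p - g a)) ` (T \<inter> cball a \<rho>)"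
    have bound: "v \<le> \<epsilon> / 2" if "v \<in> ?V" for v
    proof -
      obtain p where p: "p \<in> T" "dist a p \<le> \<rho>" and v: "v = norm (g p - g a)"
        using \<open>v \<in> ?V\<close> by auto
      have "dist (g p) (g a) < \<epsilon> / 2"
        using \<eta>[OF p(1)] p(2) \<open>\<rho> < \<eta>\<close> by (simp add: dist_commute)
      then show ?thesis
        by (simp add: v dist_norm)
    qed
    have "0 \<in> ?V"
      using a \<open>0 < \<rho>\<close> by force
    moreover from bound have "bdd_above ?V"
      by (rule bdd_aboveI)
    ultimately have "0 \<le> Sup ?V"
      by (rule cSup_upper)
    moreover have "Sup ?V \<le> \<epsilon> / 2"
      using \<open>0 \<in> ?V\<close> by (intro cSup_least[OF _ bound]) blast
    ultimately show ?thesis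
      unfolding osc_at_def by simp
  qed
  then have "eventually (\<lambda>\<rho>. 0 \<le> osc_at g T a \<rho> \<and> osc_at g T a \<rho> \<le> \<epsilon> / 2) (at_right 0)"
    unfolding eventually_at_right_field using \<open>\<eta> > 0\<close> by blast
  then show "eventually (\<lambda>\<rho>. dist (osc_at g T a \<rho>) 0 < \<epsilon>) (at_right 0)"
    by eventually_elim (use \<open>0 < \<epsilon>\<close> in auto)
qed

lemma osc_at_sum5_tendsto_0:
  assumes "continuous_on T g" "a \<in> T"
  shows "((\<lambda>(d1, d2, d3, d4, e). C * osc_at g T a (d1 + d2 + d3 + d4 + e)) \<longlongrightarrow> 0)
      (at_right 0 \<times>\<^sub>F (at_right 0 \<times>\<^sub>F (at_right 0 \<times>\<^sub>F (at_right 0 \<times>\<^sub>F at_right 0))))"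
proof -
  have "((\<lambda>p. osc_at g T a ((\<lambda>(d1, d2, d3, d4, e). d1 + d2 + d3 + d4 + e) p)) \<longlongrightarrow> 0)
      (at_right 0 \<times>\<^sub>F (at_right 0 \<times>\<^sub>F (at_right 0 \<times>\<^sub>F (at_right 0 \<times>\<^sub>F at_right 0))))"
    by (rule filterlim_compose[OF osc_at_tendsto_0[OF assms] filterlim_sum5_at_right_0])
  then show ?thesis
    by (simp add: case_prod_unfold tendsto_mult_right_zero)
qed

lemma has_derivative_linearization_bound:
  fixes f :: "'a::real_normed_vector \<Rightarrow> 'b::real_normed_vector"
  assumes f': "\<And>z. z \<in> S \<Longrightarrow> (f has_derivative blinfun_apply (f' z)) (at z)"
    and S: "convex S" "a \<in> S" "b \<in> S"
    and M: "\<And>z. z \<in> S \<Longrightarrow> norm (f' z - K) \<le> M"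
  shows "norm (f a - f b - blinfun_apply K (a - b)) \<le> M * norm (a - b)"
proof -
  have "((\<lambda>z. f z - blinfun_apply K z) has_derivative blinfun_apply (f' z - K)) (at z within S)"
    if "z \<in> S" for z
    using has_derivative_at_withinI[OF f'[OF that]] unfolding minus_blinfun.rep_eq fun_diff_def
    by (auto intro!: derivative_eq_intros)
  from differentiable_bound[OF S(1) this _ S(2,3)] M
  show ?thesis
    by (simp add: norm_blinfun.rep_eq[symmetric] blinfun.diff_right algebra_simps)
qed

lemma continuous_partial_derivative_imp_local_lipschitz:
  fixes f :: "real \<Rightarrow> 'a::real_normed_vector \<Rightarrow> 'b::real_normed_vector"
  assumes f': "\<And>t x. t \<in> T \<Longrightarrow> (f t has_derivative blinfun_apply (f' t x)) (at x)"
    and f'_cont: "continuous_on (T \<times> UNIV) (\<lambda>(t, x). f' t x)"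
  shows "local_lipschitz T UNIV f"
proof (rule local_lipschitzI)
  fix t x
  assume "t \<in> T"
  then have "\<exists>\<eta>>0. \<forall>p\<in>T \<times> UNIV. dist p (t, x) < \<eta> \<longrightarrow> dist ((\<lambda>(t, x). f' t x) p) (f' t x) < 1"
    using f'_cont unfolding continuous_on_iff by force
  then obtain \<eta> where "\<eta> > 0"
    and \<eta>: "\<And>s z. s \<in> T \<Longrightarrow> dist (s, z) (t, x) < \<eta> \<Longrightarrow> dist (f' s z) (f' t x) < 1"
    by auto
  define u where "u = \<eta> / 3"
  have "norm (f' s z) \<le> norm (f' t x) + 1" if "s \<in> cball t u \<inter> T" "z \<in> cball x u" for s z
  proof -
    have "dist (s, z) (t, x) \<le> dist s t + dist z x"
      by (rule dist_Pair_le_add)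
    also have "\<dots> < \<eta>"
      using that \<open>\<eta> > 0\<close> by (simp add: u_def dist_commute)
    finally have "dist (f' s z) (f' t x) < 1"
      using \<eta> that by blast
    then show ?thesis
      using norm_triangle_sub[of "f' s z" "f' t x"] by (simp add: dist_norm)
  qed
  then have "(norm (f' t x) + 1)-lipschitz_on (cball x u \<inter> UNIV) (f s)" if "s \<in> cball t u \<inter> T" for s
    using that f' by (intro bounded_derivative_imp_lipschitz[where f'="\<lambda>z. blinfun_apply (f' s z)"])
      (auto intro: has_derivative_at_withinI simp: norm_blinfun.rep_eq[symmetric])
  moreover have "u > 0"
    using \<open>\<eta> > 0\<close> by (simp add: u_def)
  ultimately show "\<exists>u>0. \<exists>L. \<forall>s\<in>cball t u \<inter> T. L-lipschitz_on (cball x u \<inter> UNIV) (f s)"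
    by blast
qed

lemma partial_linearization_le_osc_at:
  fixes f :: "real \<Rightarrow> 'a::{real_normed_vector, heine_borel} \<Rightarrow> 'b::real_normed_vector"
  assumes f': "\<And>t x. t \<in> T \<Longrightarrow> (f t has_derivative blinfun_apply (f' t x)) (at x)"
    and f'_cont: "continuous_on (T \<times> UNIV) (\<lambda>(t, x). f' t x)" and T: "closed T"
    and s: "s \<in> T" "dist t s \<le> d" and ab: "a \<in> cball x r" "b \<in> cball x r"
  shows "norm (f s a - f s b - blinfun_apply (f' t x) (a - b))
           \<le> osc_at (\<lambda>(t, x). f' t x) (T \<times> UNIV) (t, x) (d + r) * norm (a - b)"
proof (rule has_derivative_linearization_bound[OF f'[OF s(1)] convex_cball ab])
  fix z
  assume "z \<in> cball x r"
  then have "dist (t, x) (s, z) \<le> d + r"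
    using s(2) dist_Pair_le_add[of t x s z] by simp
  then show "norm (f' s z - f' t x) \<le> osc_at (\<lambda>(t, x). f' t x) (T \<times> UNIV) (t, x) (d + r)"
    using norm_diff_le_osc_at[OF f'_cont closed_Times[OF T closed_UNIV], of "(s, z)" "(t, x)" "d + r"] s by simp
qed

lemma projected_linearization_le_osc_at:
  fixes f :: "real \<Rightarrow> 'a::{real_normed_vector, heine_borel} \<Rightarrow> 'b::real_normed_vector"
  assumes f': "\<And>t x. t \<in> T \<Longrightarrow> (f t has_derivative blinfun_apply (f' t x)) (at x)"
    and f'_cont: "continuous_on (T \<times> UNIV) (\<lambda>(t, x). f' t x)" and T: "closed T"
    and Q: "bounded_linear Q" and B: "linear B"
    and s: "s \<in> T" "dist t s \<le> d" and y: "w + y1 \<in> cball x r" "w + y2 \<in> cball x r"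
  shows "norm (Q (f s (w + y1)) - B y1 - (Q (f s (w + y2)) - B y2)
            - Phi_op Q B (blinfun_apply (f' t x)) (y1 - y2))
           \<le> onorm Q * osc_at (\<lambda>(t, x). f' t x) (T \<times> UNIV) (t, x) (d + r) * norm (y1 - y2)"
proof -
  let ?\<Delta> = "f s (w + y1) - f s (w + y2) - blinfun_apply (f' t x) (y1 - y2)"
  have "Q (f s (w + y1)) - B y1 - (Q (f s (w + y2)) - B y2)
          - Phi_op Q B (blinfun_apply (f' t x)) (y1 - y2) = Q ?\<Delta>"
    unfolding Phi_op_def linear_diff[OF bounded_linear.linear[OF Q]] linear_diff[OF B]
    by (simp add: algebra_simps)
  moreover have "norm (Q ?\<Delta>) \<le> onorm Q * norm ?\<Delta>"
    by (rule onorm[OF Q])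
  moreover have "norm ?\<Delta> \<le> osc_at (\<lambda>(t, x). f' t x) (T \<times> UNIV) (t, x) (d + r) * norm (y1 - y2)"
    using partial_linearization_le_osc_at[OF f' f'_cont T s y] by simp
  ultimately show ?thesis
    using onorm_pos_le[OF Q] by (simp add: mult.assoc) (meson mult_left_mono order_trans)
qed

lemma decomposed_linearization_le_osc_at:
  fixes f :: "real \<Rightarrow> 'a::{real_normed_vector, heine_borel} \<Rightarrow> 'b::real_normed_vector"
  assumes f': "\<And>t x. t \<in> T \<Longrightarrow> (f t has_derivative blinfun_apply (f' t x)) (at x)"
    and f'_cont: "continuous_on (T \<times> UNIV) (\<lambda>(t, x). f' t x)" and T: "closed T"
    and Q: "bounded_linear Q" and B: "linear B" and x: "u1 + u2 + u3 + u4 = x"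
    and s: "s \<in> T \<inter> cball t d1"
    and v: "v1 \<in> cball u1 d2" "v2 \<in> cball u2 d3" "v3 \<in> cball u3 d4"
    and y: "y1 \<in> cball u4 e" "y2 \<in> cball u4 e"
  shows "norm (Q (f s (v1 + v2 + v3 + y1)) - B y1 - (Q (f s (v1 + v2 + v3 + y2)) - B y2)
            - Phi_op Q B (blinfun_apply (f' t x)) (y1 - y2))
           \<le> onorm Q * osc_at (\<lambda>(t, x). f' t x) (T \<times> UNIV) (t, x) (d1 + d2 + d3 + d4 + e)
              * norm (y1 - y2)"
proof -
  have ball: "v1 + v2 + v3 + y \<in> cball x (d2 + d3 + d4 + e)" if "y \<in> cball u4 e" for y
    using add4_mem_cball[OF v that] by (simp only: x)
  have "s \<in> T" "dist t s \<le> d1"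
    using s by auto
  from projected_linearization_le_osc_at[OF f' f'_cont T Q B this ball[OF y(1)] ball[OF y(2)]]
  show ?thesis
    by (simp only: add.assoc)
qed

theorem corollary1:
  fixes A B :: "real^'n \<Rightarrow> real^'m"
    and S1 S2 P1 P2 :: "real^'n \<Rightarrow> real^'n"
    and F1 F2 Q1 Q2 :: "real^'m \<Rightarrow> real^'m"
    and f :: "real \<Rightarrow> real^'n \<Rightarrow> real^'m"
    and f' :: "real \<Rightarrow> real^'n \<Rightarrow> ((real^'n) \<Rightarrow>\<^sub>L (real^'m))"
    and tp :: real
    and Ds2 :: "(real^'n) set"
  assumes linA: "linear A" and linB: "linear B"
    and decX: "proj_decomp4 S1 S2 P1 P2"
    and decY: "proj_decomp4 F1 F2 Q1 Q2"
    and Ds2_sub: "Ds2 \<subseteq> range S2"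
    and f_cont: "continuous_on ({tp..} \<times> UNIV) (\<lambda>(t, x). f t x)"
    and f_deriv: "\<And>t x. tp \<le> t \<Longrightarrow> (f t has_derivative blinfun_apply (f' t x)) (at x)"
    and f'_cont: "continuous_on ({tp..} \<times> UNIV) (\<lambda>(t, x). f' t x)"
    and Phi_inv: "\<And>t x. (t, x) \<in> L_set tp B F2 Q2 f \<Longrightarrow> S2 x \<in> Ds2 \<Longrightarrow>
         bij_betw (Phi_op Q2 B (blinfun_apply (f' t x))) (range P2) (range Q2)"
  shows "local_lipschitz {tp..} UNIV f \<and>
    (\<forall>t x. (t, x) \<in> L_set tp B F2 Q2 f \<and> S2 x \<in> Ds2 \<longrightarrow>
      (let Phi = Phi_op Q2 B (blinfun_apply (f' t x));
           Psi = (\<lambda>s xs1 xs2 xp1 xp2. Q2 (f s (xs1 + xs2 + xp1 + xp2)) - B xp2)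
       in \<exists>\<delta>0>0. \<exists>\<epsilon>0>0. \<exists>c :: real \<Rightarrow> real \<Rightarrow> real \<Rightarrow> real \<Rightarrow> real \<Rightarrow> real.
          (\<forall>d1 d2 d3 d4 e. 0 < d1 \<and> d1 \<le> \<delta>0 \<and> 0 < d2 \<and> d2 \<le> \<delta>0 \<and> 0 < d3 \<and> d3 \<le> \<delta>0 \<and>
               0 < d4 \<and> d4 \<le> \<delta>0 \<and> 0 < e \<and> e \<le> \<epsilon>0 \<longrightarrow>
             (\<forall>s xs1 xs2 xp1 y1 y2.
                s \<in> {tp..} \<inter> cball t d1 \<and>
                xs1 \<in> range S1 \<inter> cball (S1 x) d2 \<and>
                xs2 \<in> Ds2 \<inter> cball (S2 x) d3 \<and>
                xp1 \<in> range P1 \<inter> cball (P1 x) d4 \<and>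
                y1 \<in> range P2 \<inter> cball (P2 x) e \<and>
                y2 \<in> range P2 \<inter> cball (P2 x) e \<longrightarrow>
                norm (Psi s xs1 xs2 xp1 y1 - Psi s xs1 xs2 xp1 y2 - Phi (y1 - y2))
                  \<le> c d1 d2 d3 d4 e * norm (y1 - y2))) \<and>
          (\<exists>L. ((\<lambda>(d1, d2, d3, d4, e). c d1 d2 d3 d4 e) \<longlongrightarrow> L)
                 (at_right 0 \<times>\<^sub>F (at_right 0 \<times>\<^sub>F (at_right 0 \<times>\<^sub>F (at_right 0 \<times>\<^sub>F at_right 0)))) \<and>
               L * opnorm_on (range Q2) (the_inv_into (range P2) Phi) < 1)))"
proof -
  have f_deriv': "\<And>t x. t \<in> {tp..} \<Longrightarrow> (f t has_derivative blinfun_apply (f' t x)) (at x)"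
    using f_deriv by simp
  have dec: "S1 x + S2 x + P1 x + P2 x = x" for x
    using decX by (simp add: proj_decomp4_def)
  have Q2: "bounded_linear Q2"
    using decY by (simp add: proj_decomp4_def linear_conv_bounded_linear)
  define c where "c t x d1 d2 d3 d4 e =
    onorm Q2 * osc_at (\<lambda>(s, z). f' s z) ({tp..} \<times> UNIV) (t, x) (d1 + d2 + d3 + d4 + e)"
    for t x d1 d2 d3 d4 e
  have estimate: "norm (Q2 (f s (xs1 + xs2 + xp1 + y1)) - B y1 - (Q2 (f s (xs1 + xs2 + xp1 + y2)) - B y2)
        - Phi_op Q2 B (blinfun_apply (f' t x)) (y1 - y2)) \<le> c t x d1 d2 d3 d4 e * norm (y1 - y2)"
    if "s \<in> {tp..} \<inter> cball t d1"
      "xs1 \<in> cball (S1 x) d2" "xs2 \<in> cball (S2 x) d3" "xp1 \<in> cball (P1 x) d4"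
      "y1 \<in> cball (P2 x) e" "y2 \<in> cball (P2 x) e"
    for t x d1 d2 d3 d4 e s xs1 xs2 xp1 y1 y2
    using decomposed_linearization_le_osc_at[OF f_deriv' f'_cont closed_atLeast Q2 linB dec that]
    by (simp only: c_def)
  have limit: "\<exists>L. ((\<lambda>(d1, d2, d3, d4, e). c t x d1 d2 d3 d4 e) \<longlongrightarrow> L)
      (at_right 0 \<times>\<^sub>F (at_right 0 \<times>\<^sub>F (at_right 0 \<times>\<^sub>F (at_right 0 \<times>\<^sub>F at_right 0)))) \<and> L * K < 1"
    if "(t, x) \<in> L_set tp B F2 Q2 f" for t x and K :: real
    using that unfolding c_def L_set_def
    by (intro exI[of _ 0] conjI osc_at_sum5_tendsto_0[OF f'_cont]) simp_all
  have "local_lipschitz {tp..} UNIV f"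
    using f_deriv' f'_cont by (rule continuous_partial_derivative_imp_local_lipschitz)
  then show ?thesis
    unfolding Let_def
    apply (intro conjI allI impI)
     apply assumption
    subgoal for t x
      \<comment> \<open>the estimate holds for all radii, so the bounds \<open>\<delta>0 = \<epsilon>0 = 1\<close> are arbitrary\<close>
      by (intro exI[of _ "1::real"] exI[of _ "c t x"] conjI zero_less_one allI impI limit)
        (auto intro: estimate)
    done
qed

end
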